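(* On the exterior Kerr spacetime (Boyer–Lindquist coordinates, region $\Delta>0$, $0<\theta<\pi$), let $C\neq0$ be a constant, $f=f(r)$ a smooth function with $f(r)^2<C^2$, and $u_0\neq0$ a constant. Then $$F_M=\frac{u_0}{\Delta}\,dr\wedge\Big[\frac{\rho^2\sqrt{C^2-f^2}}{\sin\theta}\,d\theta+f\,\big(a\,dt-(r^2+a^2)\,d\varphi\big)\Big]$$ is a magnetically dominated force-free electromagnetic field. Its kernel is spanned by $e_0=\frac{1}{\sqrt{\rho^2\Delta}}[(r^2+a^2)\partial_t+a\partial_\varphi]$ and $e_1=\frac{a\sin^2\theta\,\partial_t+L\sin\theta\,\partial_\theta+\partial_\varphi}{\sqrt{\rho^2(1+L^2)}\sin\theta}$, where $L=f/\sqrt{C^2-f^2}$. If moreover $f$ is constant, then $F_M$ is a vacuum solution.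
   Context: The Kerr metric with mass $M$ and spin parameter $a$ in Boyer–Lindquist coordinates $(t,r,\theta,\varphi)$ is $ds^2=g_{tt}dt^2+2g_{t\varphi}dt\,d\varphi+\frac{\rho^2}{\Delta}dr^2+\rho^2d\theta^2+\frac{\Sigma^2\sin^2\theta}{\rho^2}d\varphi^2$, with $g_{tt}=-1+\frac{2Mr}{\rho^2}$, $g_{t\varphi}=-\frac{2Mra\sin^2\theta}{\rho^2}$, $\rho^2=r^2+a^2\cos^2\theta$, $\Delta=r^2-2Mr+a^2$, $\Sigma^2=(r^2+a^2)^2-\Delta a^2\sin^2\theta$. An electromagnetic field is a 2-form $F$ with $dF=0$; its current density vector is $j^\nu=-\nabla_\mu F^{\mu\nu}$ ($\nabla$ the Levi-Civita connection); force-free means $F(j,\chi)=0$ for all vector fields $\chi$; magnetically dominated means $F_{\mu\nu}F^{\mu\nu}>0$; vacuum means $j=0$. *)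

theory Defs
  imports "HOL-Analysis.Analysis"
begin

text \<open>Points of the Boyer--Lindquist chart are vectors x in real^4 with
  x$0 = t, x$1 = r, x$2 = theta, x$3 = phi.  Tensors are given by their
  coordinate components; index 0,1,2,3 of type 4 correspond to t,r,theta,phi.\<close>

type_synonym pt = "real ^ 4"

definition rho2 :: "real \<Rightarrow> real \<Rightarrow> real \<Rightarrow> real" where
  "rho2 a r th = r\<^sup>2 + a\<^sup>2 * (cos th)\<^sup>2"

definition Delta :: "real \<Rightarrow> real \<Rightarrow> real \<Rightarrow> real" where
  "Delta M a r = r\<^sup>2 - 2 * M * r + a\<^sup>2"

definition Sig2 :: "real \<Rightarrow> real \<Rightarrow> real \<Rightarrow> real \<Rightarrow> real" where
  "Sig2 M a r th = (r\<^sup>2 + a\<^sup>2)\<^sup>2 - Delta M a r * a\<^sup>2 * (sin th)\<^sup>2"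

definition kerr_g :: "real \<Rightarrow> real \<Rightarrow> pt \<Rightarrow> real^4^4" where
  "kerr_g M a x = (let r = x$1; th = x$2 in
     (\<chi> i j.
        if i = 0 \<and> j = 0 then -1 + 2 * M * r / rho2 a r th
        else if (i = 0 \<and> j = 3) \<or> (i = 3 \<and> j = 0) then - 2 * M * r * a * (sin th)\<^sup>2 / rho2 a r th
        else if i = 1 \<and> j = 1 then rho2 a r th / Delta M a r
        else if i = 2 \<and> j = 2 then rho2 a r th
        else if i = 3 \<and> j = 3 then Sig2 M a r th * (sin th)\<^sup>2 / rho2 a r th
        else 0))"

definition kerr_ginv :: "real \<Rightarrow> real \<Rightarrow> pt \<Rightarrow> real^4^4" where
  "kerr_ginv M a x = matrix_inv (kerr_g M a x)"

text \<open>Exterior region: outside the outer horizon r_+ = M + sqrt(M^2 - a^2),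
  where Delta > 0, and 0 < theta < pi.\<close>
definition exterior :: "real \<Rightarrow> real \<Rightarrow> pt set" where
  "exterior M a = {x. M + sqrt (M\<^sup>2 - a\<^sup>2) < x$1 \<and> 0 < x$2 \<and> x$2 < pi}"

definition pd :: "(pt \<Rightarrow> real) \<Rightarrow> 4 \<Rightarrow> pt \<Rightarrow> real" where
  "pd h i x = deriv (\<lambda>s. h (x + s *\<^sub>R axis i 1)) 0"

definition christoffel :: "real \<Rightarrow> real \<Rightarrow> pt \<Rightarrow> 4 \<Rightarrow> 4 \<Rightarrow> 4 \<Rightarrow> real" where
  "christoffel M a x l m n =
     (1/2) * (\<Sum>s\<in>UNIV. kerr_ginv M a x $ l $ s *
        (pd (\<lambda>y. kerr_g M a y $ s $ n) m x + pd (\<lambda>y. kerr_g M a y $ s $ m) n x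
         - pd (\<lambda>y. kerr_g M a y $ m $ n) s x))"

text \<open>A 2-form is given by its antisymmetric covariant components F_{mu nu}.\<close>
type_synonym field = "pt \<Rightarrow> real^4^4"

definition wedge1 :: "real^4 \<Rightarrow> real^4 \<Rightarrow> real^4^4" where
  "wedge1 \<alpha> \<beta> = (\<chi> m n. \<alpha>$m * \<beta>$n - \<alpha>$n * \<beta>$m)"

definition Fup :: "real \<Rightarrow> real \<Rightarrow> field \<Rightarrow> pt \<Rightarrow> real^4^4" where
  "Fup M a F x = (\<chi> m n. \<Sum>p\<in>UNIV. \<Sum>q\<in>UNIV.
        kerr_ginv M a x $ m $ p * kerr_ginv M a x $ n $ q * F x $ p $ q)"

definition closed_form :: "field \<Rightarrow> pt set \<Rightarrow> bool" where
  "closed_form F U \<longleftrightarrow> (\<forall>x\<in>U. \<forall>l m n.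
      pd (\<lambda>y. F y $ m $ n) l x + pd (\<lambda>y. F y $ n $ l) m x + pd (\<lambda>y. F y $ l $ m) n x = 0)"

text \<open>Current j^nu = - nabla_mu F^{mu nu}.\<close>
definition current :: "real \<Rightarrow> real \<Rightarrow> field \<Rightarrow> pt \<Rightarrow> real^4" where
  "current M a F x = (\<chi> n. - (\<Sum>m\<in>UNIV.
       pd (\<lambda>y. Fup M a F y $ m $ n) m x
       + (\<Sum>l\<in>UNIV. christoffel M a x m m l * Fup M a F x $ l $ n
                    + christoffel M a x n m l * Fup M a F x $ m $ l)))"

definition form_apply :: "real^4^4 \<Rightarrow> real^4 \<Rightarrow> real^4 \<Rightarrow> real" where
  "form_apply B v w = (\<Sum>m\<in>UNIV. \<Sum>n\<in>UNIV. B $ m $ n * v $ m * w $ n)"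

definition force_free :: "real \<Rightarrow> real \<Rightarrow> field \<Rightarrow> pt set \<Rightarrow> bool" where
  "force_free M a F U \<longleftrightarrow> (\<forall>x\<in>U. \<forall>w. form_apply (F x) (current M a F x) w = 0)"

definition magnetically_dominated :: "real \<Rightarrow> real \<Rightarrow> field \<Rightarrow> pt set \<Rightarrow> bool" where
  "magnetically_dominated M a F U \<longleftrightarrow>
     (\<forall>x\<in>U. (\<Sum>m\<in>UNIV. \<Sum>n\<in>UNIV. F x $ m $ n * Fup M a F x $ m $ n) > 0)"

definition vacuum :: "real \<Rightarrow> real \<Rightarrow> field \<Rightarrow> pt set \<Rightarrow> bool" where
  "vacuum M a F U \<longleftrightarrow> (\<forall>x\<in>U. current M a F x = 0)"

definition form_kernel :: "real^4^4 \<Rightarrow> (real^4) set" where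
  "form_kernel B = {v. \<forall>w. form_apply B v w = 0}"

definition smooth_real_on :: "real set \<Rightarrow> (real \<Rightarrow> real) \<Rightarrow> bool" where
  "smooth_real_on S f \<longleftrightarrow> (\<forall>k. \<forall>r\<in>S. ((deriv ^^ k) f) differentiable (at r))"

definition F_M :: "real \<Rightarrow> real \<Rightarrow> real \<Rightarrow> (real \<Rightarrow> real) \<Rightarrow> real \<Rightarrow> field" where
  "F_M M a C f u0 x = (let r = x$1; th = x$2 in
     (u0 / Delta M a r) *\<^sub>R wedge1 (axis 1 1)
        ((rho2 a r th * sqrt (C\<^sup>2 - (f r)\<^sup>2) / sin th) *\<^sub>R axis 2 1
         + (f r * a) *\<^sub>R axis 0 1 - (f r * (r\<^sup>2 + a\<^sup>2)) *\<^sub>R axis 3 1))"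

definition e0 :: "real \<Rightarrow> real \<Rightarrow> pt \<Rightarrow> real^4" where
  "e0 M a x = (let r = x$1; th = x$2 in
     (1 / sqrt (rho2 a r th * Delta M a r)) *\<^sub>R ((r\<^sup>2 + a\<^sup>2) *\<^sub>R axis 0 1 + a *\<^sub>R axis 3 1))"

definition e1 :: "real \<Rightarrow> real \<Rightarrow> (real \<Rightarrow> real) \<Rightarrow> pt \<Rightarrow> real^4" where
  "e1 a C f x = (let r = x$1; th = x$2; L = f r / sqrt (C\<^sup>2 - (f r)\<^sup>2) in
     (1 / (sqrt (rho2 a r th * (1 + L\<^sup>2)) * sin th)) *\<^sub>R
       ((a * (sin th)\<^sup>2) *\<^sub>R axis 0 1 + (L * sin th) *\<^sub>R axis 2 1 + axis 3 1))"

end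

theory Submission
  imports Defs
begin

text \<open>On the exterior region all metric and field coefficients depend only on \<open>r\<close> and \<open>\<theta>\<close>, and the
  inverse metric is explicit. Writing \<open>F_M = (u0/\<Delta>) dr \<and> \<beta>\<close>, raising indices gives
  \<open>F\<^sup>\<mu>\<^sup>\<nu> = (u0/\<rho>\<^sup>2) \<partial>\<^sub>r \<and> b\<close> with \<open>b = g\<^sup>-\<^sup>1 \<beta>\<close>. As \<open>F\<^sup>\<mu>\<^sup>\<nu>\<close> is antisymmetric, its divergence only
  involves the contracted Christoffel symbols, the gradient of \<open>log (\<rho>\<^sup>2 sin \<theta>) = log sqrt (- det g)\<close>;
  this gives \<open>j = - (u0/\<rho>\<^sup>2) \<partial>\<^sub>r b\<close>, which vanishes when \<open>f\<close> is constant. Hence \<open>j\<^sup>r = 0\<close> and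
  \<open>\<beta>(j) = 0\<close>, so \<open>F_M(j, \<cdot>) = j\<^sup>r \<beta> - \<beta>(j) dr = 0\<close>. The invariant
  \<open>F\<^sub>\<mu>\<^sub>\<nu> F\<^sup>\<mu>\<^sup>\<nu> = 2 u0\<^sup>2 C\<^sup>2 / (\<Delta> sin\<^sup>2 \<theta>)\<close> is positive, and the kernel of \<open>dr \<and> \<beta>\<close> is the common
  kernel of \<open>dr\<close> and \<open>\<beta>\<close>, which \<open>e0\<close> and \<open>e1\<close> span.\<close>

section \<open>Tensor algebra in four dimensions\<close>

lemma exhaust_4_cases [case_names t r theta phi]:
  obtains "(i::4) = 0" | "i = 1" | "i = 2" | "i = 3"
  using exhaust_4[of i] by (auto simp del: num1_eq_iff)

lemma numeral_4_eq_0: "(4::4) = 0"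
  by simp

lemma sum_UNIV_4: "sum f (UNIV::4 set) = f 0 + f 1 + f 2 + f 3"
  by (simp add: sum_4 ac_simps numeral_4_eq_0)

lemma all_4_iff: "(\<forall>i::4. P i) \<longleftrightarrow> P 0 \<and> P 1 \<and> P 2 \<and> P 3"
  by (metis exhaust_4_cases)

lemma sum_sym_antisym_eq_0:
  fixes c A :: "'a::finite \<Rightarrow> 'a \<Rightarrow> real"
  assumes "\<And>m l. c m l = c l m" and "\<And>m l. A m l = - A l m"
  shows "(\<Sum>m\<in>UNIV. \<Sum>l\<in>UNIV. c m l * A m l) = 0"
proof -
  let ?S = "\<Sum>m\<in>UNIV. \<Sum>l\<in>UNIV. c m l * A m l"
  have "?S = (\<Sum>l\<in>UNIV. \<Sum>m\<in>UNIV. c m l * A m l)"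
    by (rule sum.swap)
  also have "\<dots> = (\<Sum>l\<in>UNIV. \<Sum>m\<in>UNIV. - (c l m * A l m))"
    by (intro sum.cong refl) (metis assms mult_minus_right)
  also have "\<dots> = - ?S" by (simp add: sum_negf)
  finally show ?thesis by simp
qed

lemma sum_christoffel_trace:
  fixes A :: "'a::finite \<Rightarrow> 'a \<Rightarrow> real" and B :: "'a \<Rightarrow> 'a \<Rightarrow> 'a \<Rightarrow> real"
  assumes "\<And>m s. A m s = A s m"
  shows "(\<Sum>m\<in>UNIV. 1/2 * (\<Sum>s\<in>UNIV. A m s * (B m s l + B l s m - B s m l)))
       = 1/2 * (\<Sum>m\<in>UNIV. \<Sum>s\<in>UNIV. A m s * B l s m)"
proof -
  have swap: "(\<Sum>m\<in>UNIV. \<Sum>s\<in>UNIV. A m s * B s m l) = (\<Sum>m\<in>UNIV. \<Sum>s\<in>UNIV. A m s * B m s l)"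
    by (subst sum.swap) (simp add: assms)
  have "(\<Sum>m\<in>UNIV. 1/2 * (\<Sum>s\<in>UNIV. A m s * (B m s l + B l s m - B s m l)))
     = 1/2 * ((\<Sum>m\<in>UNIV. \<Sum>s\<in>UNIV. A m s * B m s l) + (\<Sum>m\<in>UNIV. \<Sum>s\<in>UNIV. A m s * B l s m)
              - (\<Sum>m\<in>UNIV. \<Sum>s\<in>UNIV. A m s * B s m l))"
    by (simp add: sum_distrib_left algebra_simps sum.distrib sum_subtractf)
  then show ?thesis using swap by simp
qed

lemma matrix_inv_eqI:
  fixes A B :: "'a::comm_ring_1^'n^'n"
  assumes "A ** B = mat 1" and "B ** A = mat 1"
  shows "matrix_inv A = B"
proof -
  let ?A = "matrix_inv A"
  have "A ** ?A = mat 1 \<and> ?A ** A = mat 1"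
    unfolding matrix_inv_def using assms by (intro someI_ex[of "\<lambda>A'. A ** A' = mat 1 \<and> A' ** A = mat 1"]) blast
  then have "?A = ?A ** (A ** B)" "?A ** A = mat 1" using assms by simp_all
  then show ?thesis by (simp add: matrix_mul_assoc)
qed

lemma form_apply_scaleR: "form_apply (c *\<^sub>R B) v w = c * form_apply B v w"
  by (simp add: form_apply_def sum_distrib_left mult_ac)

lemma form_apply_wedge1:
  "form_apply (wedge1 \<alpha> \<beta>) v w = (\<alpha> \<bullet> v) * (\<beta> \<bullet> w) - (\<beta> \<bullet> v) * (\<alpha> \<bullet> w)"
  by (simp add: form_apply_def wedge1_def inner_vec_def sum_UNIV_4 algebra_simps)

lemma wedge1_contract:
  "(\<Sum>m\<in>UNIV. \<Sum>n\<in>UNIV. wedge1 \<alpha> \<beta> $ m $ n * wedge1 \<gamma> \<delta> $ m $ n)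
     = 2 * ((\<alpha> \<bullet> \<gamma>) * (\<beta> \<bullet> \<delta>) - (\<alpha> \<bullet> \<delta>) * (\<beta> \<bullet> \<gamma>))"
  by (simp add: wedge1_def inner_vec_def sum_UNIV_4 algebra_simps)

lemma form_kernel_scaleR: "c \<noteq> 0 \<Longrightarrow> form_kernel (c *\<^sub>R B) = form_kernel B"
  by (simp add: form_kernel_def form_apply_scaleR)

lemma form_kernel_wedge1:
  assumes "\<alpha> \<noteq> 0" and "\<beta> \<notin> span {\<alpha>}"
  shows "form_kernel (wedge1 \<alpha> \<beta>) = {v. \<alpha> \<bullet> v = 0 \<and> \<beta> \<bullet> v = 0}"
proof (intro set_eqI iffI)
  fix v assume "v \<in> form_kernel (wedge1 \<alpha> \<beta>)"
  then have "\<forall>w. ((\<alpha> \<bullet> v) *\<^sub>R \<beta> - (\<beta> \<bullet> v) *\<^sub>R \<alpha>) \<bullet> w = 0"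
    by (simp add: form_kernel_def form_apply_wedge1 inner_diff_left)
  then have comb: "(\<alpha> \<bullet> v) *\<^sub>R \<beta> = (\<beta> \<bullet> v) *\<^sub>R \<alpha>"
    by (metis eq_iff_diff_eq_0 inner_eq_zero_iff)
  have "\<alpha> \<bullet> v = 0"
  proof (rule ccontr)
    assume "\<alpha> \<bullet> v \<noteq> 0"
    then have "\<beta> = inverse (\<alpha> \<bullet> v) *\<^sub>R ((\<alpha> \<bullet> v) *\<^sub>R \<beta>)"
      by simp
    also have "\<dots> = inverse (\<alpha> \<bullet> v) *\<^sub>R ((\<beta> \<bullet> v) *\<^sub>R \<alpha>)"
      by (simp only: comb)
    finally show False using assms(2) by (metis span_base span_scale singletonI)
  qed
  moreover then have "\<beta> \<bullet> v = 0" using comb assms(1) by simp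
  ultimately show "v \<in> {v. \<alpha> \<bullet> v = 0 \<and> \<beta> \<bullet> v = 0}" by simp
qed (simp add: form_kernel_def form_apply_wedge1)

section \<open>Coordinate derivatives and the exterior region\<close>

lemma deriv_shift_at_0: "deriv (\<lambda>s. h (c + s)) 0 = deriv h (c::real)"
  by (simp add: deriv_shift_0[of h c] o_def)

definition bl_point :: "real \<Rightarrow> real \<Rightarrow> pt" where
  "bl_point r t = (\<chi> i. if i = 1 then r else if i = 2 then t else 0)"

lemma bl_point_nth [simp]: "bl_point r t $ 1 = r" "bl_point r t $ 2 = t"
  by (simp_all add: bl_point_def)

lemma pd_r_theta:
  fixes H :: "real \<Rightarrow> real \<Rightarrow> real"
  shows "pd (\<lambda>y. H (y$1) (y$2)) i x =
    (if i = 1 then deriv (\<lambda>r. H r (x$2)) (x$1) else if i = 2 then deriv (\<lambda>t. H (x$1) t) (x$2) else 0)"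
  by (cases i rule: exhaust_4_cases)
    (simp_all add: pd_def axis_def deriv_shift_at_0[of "\<lambda>r. H r (x$2)"] deriv_shift_at_0[of "\<lambda>t. H (x$1) t"])

lemma pd_cong_open:
  assumes "open U" and "x \<in> U" and "\<forall>y\<in>U. h y = g y"
  shows "pd h i x = pd g i x"
proof -
  have "open ((\<lambda>s::real. x + s *\<^sub>R axis i 1) -` U)"
    using assms(1) by (intro open_vimage continuous_intros)
  then have "eventually (\<lambda>s. x + s *\<^sub>R axis i 1 \<in> U) (nhds 0)"
    using assms(2) eventually_nhds_in_open by fastforce
  then have "eventually (\<lambda>s. h (x + s *\<^sub>R axis i 1) = g (x + s *\<^sub>R axis i 1)) (nhds 0)"
    by eventually_elim (use assms(3) in blast)
  then show ?thesis unfolding pd_def deriv_def by (simp add: DERIV_cong_ev)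
qed

lemma open_exterior: "open (exterior M a)"
  unfolding exterior_def by (intro open_Collect_conj open_Collect_less continuous_intros)

lemma exterior_pos:
  assumes "M > 0" and "\<bar>a\<bar> \<le> M" and "x \<in> exterior M a"
  shows "Delta M a (x$1) > 0" and "sin (x$2) > 0" and "rho2 a (x$1) (x$2) > 0"
proof -
  have r: "M + sqrt (M^2 - a^2) < x$1" and t: "0 < x$2" "x$2 < pi"
    using assms(3) by (auto simp: exterior_def)
  have "a^2 \<le> M^2" using assms(1,2) by (metis abs_ge_zero power2_abs power_mono)
  then have root: "sqrt (M^2 - a^2) \<ge> 0" "(sqrt (M^2 - a^2))^2 = M^2 - a^2" by simp_all
  have "(sqrt (M^2 - a^2))^2 < (x$1 - M)^2"
    using r root(1) by (intro power_strict_mono) auto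
  then show "Delta M a (x$1) > 0" unfolding Delta_def root(2) by (simp add: power2_eq_square algebra_simps)
  show "sin (x$2) > 0" using t by (simp add: sin_gt_zero)
  have "x$1 > 0" using r root(1) assms(1) by linarith
  then show "rho2 a (x$1) (x$2) > 0" unfolding rho2_def by (simp add: add_pos_nonneg)
qed

section \<open>The Kerr metric in the exterior region\<close>

definition kerr_ginv_bl :: "real \<Rightarrow> real \<Rightarrow> real \<Rightarrow> real \<Rightarrow> real^4^4" where
  "kerr_ginv_bl M a r t = (\<chi> i j.
     if i = 0 \<and> j = 0 then - Sig2 M a r t / (rho2 a r t * Delta M a r)
     else if (i = 0 \<and> j = 3) \<or> (i = 3 \<and> j = 0) then - 2 * M * r * a / (rho2 a r t * Delta M a r)
     else if i = 1 \<and> j = 1 then Delta M a r / rho2 a r t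
     else if i = 2 \<and> j = 2 then 1 / rho2 a r t
     else if i = 3 \<and> j = 3 then (Delta M a r - a^2 * (sin t)^2) / (rho2 a r t * Delta M a r * (sin t)^2)
     else 0)"

lemma kerr_ginv_bl_sym: "kerr_ginv_bl M a r t $ m $ s = kerr_ginv_bl M a r t $ s $ m"
  by (cases m rule: exhaust_4_cases; cases s rule: exhaust_4_cases) (simp_all add: kerr_ginv_bl_def)

lemma kerr_ginv_eq_bl:
  assumes "Delta M a (x$1) \<noteq> 0" and "sin (x$2) \<noteq> 0" and "rho2 a (x$1) (x$2) \<noteq> 0"
  shows "kerr_ginv M a x = kerr_ginv_bl M a (x$1) (x$2)"
proof -
  define r t where "r = x$1" and "t = x$2"
  have nz: "Delta M a r \<noteq> 0" "rho2 a r t \<noteq> 0" "sin t \<noteq> 0"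
    using assms by (simp_all add: r_def t_def)
  have pyth: "(sin t)^2 + (cos t)^2 = 1" by simp
  have "kerr_g M a x ** kerr_ginv_bl M a r t = mat 1 \<and> kerr_ginv_bl M a r t ** kerr_g M a x = mat 1"
    using nz
    apply (simp add: vec_eq_iff all_4_iff sum_UNIV_4 matrix_matrix_mult_def mat_def kerr_g_def
        kerr_ginv_bl_def Let_def r_def[symmetric] t_def[symmetric] Sig2_def)
    apply (intro conjI)
       apply (simp_all add: field_simps)
     apply (unfold rho2_def Delta_def)
    using pyth apply algebra+
    done
  then show ?thesis unfolding kerr_ginv_def r_def t_def by (intro matrix_inv_eqI) auto
qed

definition rho2_dtheta :: "real \<Rightarrow> real \<Rightarrow> real" where
  "rho2_dtheta a t = - 2 * a^2 * cos t * sin t"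

lemma rho2_has_deriv_r: "D = 2 * r \<Longrightarrow> ((\<lambda>r. rho2 a r t) has_real_derivative D) (at r)"
  unfolding rho2_def by (auto intro!: derivative_eq_intros)

lemma rho2_has_deriv_theta: "((\<lambda>t. rho2 a r t) has_real_derivative rho2_dtheta a t) (at t)"
  unfolding rho2_def rho2_dtheta_def by (auto intro!: derivative_eq_intros simp: field_simps)

lemma Delta_has_deriv: "((\<lambda>r. Delta M a r) has_real_derivative 2 * r - 2 * M) (at r)"
  unfolding Delta_def by (auto intro!: derivative_eq_intros)

lemma Sig2_has_deriv_r:
  "((\<lambda>r. Sig2 M a r t) has_real_derivative 4 * r * (r^2 + a^2) - (2 * r - 2 * M) * a^2 * (sin t)^2) (at r)"
  unfolding Sig2_def by (auto intro!: derivative_eq_intros Delta_has_deriv simp: field_simps)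

lemma Sig2_has_deriv_theta:
  "((\<lambda>t. Sig2 M a r t) has_real_derivative - Delta M a r * a^2 * 2 * sin t * cos t) (at t)"
  unfolding Sig2_def by (auto intro!: derivative_eq_intros simp: field_simps)

definition kerr_g_dr :: "real \<Rightarrow> real \<Rightarrow> real \<Rightarrow> real \<Rightarrow> real^4^4" where
  "kerr_g_dr M a r t = (\<chi> s n.
     if s = 0 \<and> n = 0 then 2 * M / rho2 a r t - 4 * M * r^2 / (rho2 a r t)^2
     else if (s = 0 \<and> n = 3) \<or> (s = 3 \<and> n = 0) then
       - 2 * M * a * (sin t)^2 / rho2 a r t + 4 * M * r^2 * a * (sin t)^2 / (rho2 a r t)^2
     else if s = 1 \<and> n = 1 then 2 * r / Delta M a r - rho2 a r t * (2 * r - 2 * M) / (Delta M a r)^2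
     else if s = 2 \<and> n = 2 then 2 * r
     else if s = 3 \<and> n = 3 then
       (4 * r * (r^2 + a^2) - (2 * r - 2 * M) * a^2 * (sin t)^2) * (sin t)^2 / rho2 a r t
       - Sig2 M a r t * (sin t)^2 * 2 * r / (rho2 a r t)^2
     else 0)"

definition kerr_g_dtheta :: "real \<Rightarrow> real \<Rightarrow> real \<Rightarrow> real \<Rightarrow> real^4^4" where
  "kerr_g_dtheta M a r t = (\<chi> s n.
     if s = 0 \<and> n = 0 then - 2 * M * r * rho2_dtheta a t / (rho2 a r t)^2
     else if (s = 0 \<and> n = 3) \<or> (s = 3 \<and> n = 0) then
       - 2 * M * r * a * (2 * sin t * cos t) / rho2 a r t
       + 2 * M * r * a * (sin t)^2 * rho2_dtheta a t / (rho2 a r t)^2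
     else if s = 1 \<and> n = 1 then rho2_dtheta a t / Delta M a r
     else if s = 2 \<and> n = 2 then rho2_dtheta a t
     else if s = 3 \<and> n = 3 then
       (- Delta M a r * a^2 * 2 * sin t * cos t * (sin t)^2 + Sig2 M a r t * 2 * sin t * cos t) / rho2 a r t
       - Sig2 M a r t * (sin t)^2 * rho2_dtheta a t / (rho2 a r t)^2
     else 0)"

lemma kerr_g_has_deriv_r:
  assumes "rho2 a r t \<noteq> 0" and "Delta M a r \<noteq> 0"
  shows "((\<lambda>r. kerr_g M a (bl_point r t) $ s $ n) has_real_derivative kerr_g_dr M a r t $ s $ n) (at r)"
  using assms
  by (cases s rule: exhaust_4_cases; cases n rule: exhaust_4_cases)
    (auto simp: kerr_g_def kerr_g_dr_def Let_def field_simps power2_eq_square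
      intro!: derivative_eq_intros rho2_has_deriv_r Delta_has_deriv Sig2_has_deriv_r)

lemma kerr_g_has_deriv_theta:
  assumes "rho2 a r t \<noteq> 0" and "Delta M a r \<noteq> 0"
  shows "((\<lambda>t. kerr_g M a (bl_point r t) $ s $ n) has_real_derivative kerr_g_dtheta M a r t $ s $ n) (at t)"
  using assms
  by (cases s rule: exhaust_4_cases; cases n rule: exhaust_4_cases)
    (auto simp: kerr_g_def kerr_g_dtheta_def Let_def field_simps power2_eq_square
      intro!: derivative_eq_intros rho2_has_deriv_theta Sig2_has_deriv_theta)

definition kerr_g_pd :: "real \<Rightarrow> real \<Rightarrow> real \<Rightarrow> real \<Rightarrow> 4 \<Rightarrow> real^4^4" where
  "kerr_g_pd M a r t m = (if m = 1 then kerr_g_dr M a r t else if m = 2 then kerr_g_dtheta M a r t else 0)"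

lemma pd_kerr_g:
  assumes "rho2 a (x$1) (x$2) \<noteq> 0" and "Delta M a (x$1) \<noteq> 0"
  shows "pd (\<lambda>y. kerr_g M a y $ s $ n) m x = kerr_g_pd M a (x$1) (x$2) m $ s $ n"
proof -
  have "(\<lambda>y. kerr_g M a y $ s $ n) = (\<lambda>y. kerr_g M a (bl_point (y$1) (y$2)) $ s $ n)"
    by (simp add: kerr_g_def Let_def)
  then show ?thesis
    using pd_r_theta[of "\<lambda>r t. kerr_g M a (bl_point r t) $ s $ n" m x]
      DERIV_imp_deriv[OF kerr_g_has_deriv_r[OF assms]] DERIV_imp_deriv[OF kerr_g_has_deriv_theta[OF assms]]
    by (simp add: kerr_g_pd_def)
qed

text \<open>The gradient of \<open>log (\<rho>\<^sup>2 sin \<theta>)\<close>, where \<open>\<rho>\<^sup>2 sin \<theta> = sqrt (- det g)\<close>.\<close>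
definition log_vol_grad :: "real \<Rightarrow> real \<Rightarrow> real \<Rightarrow> 4 \<Rightarrow> real" where
  "log_vol_grad a r t l = (if l = 1 then 2 * r / rho2 a r t
     else if l = 2 then (rho2_dtheta a t * sin t + rho2 a r t * cos t) / (rho2 a r t * sin t) else 0)"

lemma kerr_tphi_block_trace_dr:
  assumes "rho2 a r t \<noteq> 0" and "Delta M a r \<noteq> 0" and "sin t \<noteq> 0"
  shows "kerr_ginv_bl M a r t $ 0 $ 0 * kerr_g_dr M a r t $ 0 $ 0
       + 2 * (kerr_ginv_bl M a r t $ 0 $ 3 * kerr_g_dr M a r t $ 0 $ 3)
       + kerr_ginv_bl M a r t $ 3 $ 3 * kerr_g_dr M a r t $ 3 $ 3 = (2 * r - 2 * M) / Delta M a r"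
proof -
  have pyth: "(sin t)^2 + (cos t)^2 = 1" by simp
  show ?thesis using assms
    apply (simp add: kerr_ginv_bl_def kerr_g_dr_def Sig2_def)
    apply (simp add: field_simps)
    apply (unfold rho2_def Delta_def)
    using pyth apply algebra
    done
qed

lemma kerr_tphi_block_trace_dtheta:
  assumes "rho2 a r t \<noteq> 0" and "Delta M a r \<noteq> 0" and "sin t \<noteq> 0"
  shows "kerr_ginv_bl M a r t $ 0 $ 0 * kerr_g_dtheta M a r t $ 0 $ 0
       + 2 * (kerr_ginv_bl M a r t $ 0 $ 3 * kerr_g_dtheta M a r t $ 0 $ 3)
       + kerr_ginv_bl M a r t $ 3 $ 3 * kerr_g_dtheta M a r t $ 3 $ 3 = 2 * cos t / sin t"
proof -
  have pyth: "(sin t)^2 + (cos t)^2 = 1" by simp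
  show ?thesis using assms
    apply (simp add: kerr_ginv_bl_def kerr_g_dtheta_def Sig2_def rho2_dtheta_def)
    apply (simp add: field_simps)
    apply (unfold rho2_def Delta_def)
    using pyth apply algebra
    done
qed

lemma trace_kerr_ginv_dr:
  assumes "rho2 a r t \<noteq> 0" and "Delta M a r \<noteq> 0" and "sin t \<noteq> 0"
  shows "(\<Sum>m\<in>UNIV. \<Sum>s\<in>UNIV. kerr_ginv_bl M a r t $ m $ s * kerr_g_dr M a r t $ s $ m)
       = 2 * log_vol_grad a r t 1"
proof -
  let ?G = "kerr_ginv_bl M a r t" and ?dG = "kerr_g_dr M a r t"
  have "(\<Sum>m\<in>UNIV. \<Sum>s\<in>UNIV. ?G $ m $ s * ?dG $ s $ m)
      = (?G $ 0 $ 0 * ?dG $ 0 $ 0 + 2 * (?G $ 0 $ 3 * ?dG $ 0 $ 3) + ?G $ 3 $ 3 * ?dG $ 3 $ 3)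
        + ?G $ 1 $ 1 * ?dG $ 1 $ 1 + ?G $ 2 $ 2 * ?dG $ 2 $ 2"
    by (simp add: sum_UNIV_4 kerr_ginv_bl_def kerr_g_dr_def algebra_simps)
  also have "\<dots> = (2 * r - 2 * M) / Delta M a r + ?G $ 1 $ 1 * ?dG $ 1 $ 1 + ?G $ 2 $ 2 * ?dG $ 2 $ 2"
    by (simp only: kerr_tphi_block_trace_dr[OF assms])
  also have "\<dots> = 2 * log_vol_grad a r t 1"
    using assms by (simp add: kerr_ginv_bl_def kerr_g_dr_def log_vol_grad_def field_simps power2_eq_square)
  finally show ?thesis .
qed

lemma trace_kerr_ginv_dtheta:
  assumes "rho2 a r t \<noteq> 0" and "Delta M a r \<noteq> 0" and "sin t \<noteq> 0"
  shows "(\<Sum>m\<in>UNIV. \<Sum>s\<in>UNIV. kerr_ginv_bl M a r t $ m $ s * kerr_g_dtheta M a r t $ s $ m)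
       = 2 * log_vol_grad a r t 2"
proof -
  let ?G = "kerr_ginv_bl M a r t" and ?dG = "kerr_g_dtheta M a r t"
  have "(\<Sum>m\<in>UNIV. \<Sum>s\<in>UNIV. ?G $ m $ s * ?dG $ s $ m)
      = (?G $ 0 $ 0 * ?dG $ 0 $ 0 + 2 * (?G $ 0 $ 3 * ?dG $ 0 $ 3) + ?G $ 3 $ 3 * ?dG $ 3 $ 3)
        + ?G $ 1 $ 1 * ?dG $ 1 $ 1 + ?G $ 2 $ 2 * ?dG $ 2 $ 2"
    by (simp add: sum_UNIV_4 kerr_ginv_bl_def kerr_g_dtheta_def algebra_simps)
  also have "\<dots> = 2 * cos t / sin t + ?G $ 1 $ 1 * ?dG $ 1 $ 1 + ?G $ 2 $ 2 * ?dG $ 2 $ 2"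
    by (simp only: kerr_tphi_block_trace_dtheta[OF assms])
  also have "\<dots> = 2 * log_vol_grad a r t 2"
    using assms by (simp add: kerr_ginv_bl_def kerr_g_dtheta_def log_vol_grad_def field_simps power2_eq_square)
  finally show ?thesis .
qed

lemma christoffel_trace:
  assumes R: "rho2 a (x$1) (x$2) \<noteq> 0" and D: "Delta M a (x$1) \<noteq> 0" and S: "sin (x$2) \<noteq> 0"
  shows "(\<Sum>m\<in>UNIV. christoffel M a x m m l) = log_vol_grad a (x$1) (x$2) l"
proof -
  define r t where "r = x$1" and "t = x$2"
  let ?G = "kerr_ginv_bl M a r t" and ?dG = "\<lambda>m s n. kerr_g_pd M a r t m $ s $ n"
  have nz: "rho2 a r t \<noteq> 0" "Delta M a r \<noteq> 0" "sin t \<noteq> 0"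
    using D R S by (simp_all add: r_def t_def)
  have "christoffel M a x m m l = 1/2 * (\<Sum>s\<in>UNIV. ?G $ m $ s * (?dG m s l + ?dG l s m - ?dG s m l))" for m
    unfolding christoffel_def kerr_ginv_eq_bl[OF D S R] pd_kerr_g[OF R D] r_def t_def by simp
  then have "(\<Sum>m\<in>UNIV. christoffel M a x m m l)
      = (\<Sum>m\<in>UNIV. 1/2 * (\<Sum>s\<in>UNIV. ?G $ m $ s * (?dG m s l + ?dG l s m - ?dG s m l)))"
    by (intro sum.cong) auto
  also have "\<dots> = 1/2 * (\<Sum>m\<in>UNIV. \<Sum>s\<in>UNIV. ?G $ m $ s * ?dG l s m)"
    by (rule sum_christoffel_trace[of "\<lambda>m s. ?G $ m $ s", OF kerr_ginv_bl_sym])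
  also have "\<dots> = log_vol_grad a r t l"
    by (cases l rule: exhaust_4_cases)
      (simp_all add: kerr_g_pd_def trace_kerr_ginv_dr[OF nz] trace_kerr_ginv_dtheta[OF nz],
       simp_all add: log_vol_grad_def)
  finally show ?thesis by (simp add: r_def t_def)
qed

lemma kerr_g_sym: "kerr_g M a y $ i $ j = kerr_g M a y $ j $ i"
  by (cases i rule: exhaust_4_cases; cases j rule: exhaust_4_cases) (simp_all add: kerr_g_def Let_def)

lemma christoffel_sym: "christoffel M a x n m l = christoffel M a x n l m"
proof -
  have "(\<lambda>y. kerr_g M a y $ m $ l) = (\<lambda>y. kerr_g M a y $ l $ m)"
    by (simp add: kerr_g_sym)
  then show ?thesis unfolding christoffel_def by (simp add: algebra_simps)
qed

section \<open>The field and its current\<close>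

lemma wedge1_scaleR_left: "wedge1 (c *\<^sub>R \<alpha>) \<beta> = c *\<^sub>R wedge1 \<alpha> \<beta>"
  by (simp add: wedge1_def vec_eq_iff algebra_simps)

lemma Fup_eq_wedge1:
  assumes "F x = c *\<^sub>R wedge1 \<alpha> \<beta>"
  shows "Fup M a F x = c *\<^sub>R wedge1 (kerr_ginv M a x *v \<alpha>) (kerr_ginv M a x *v \<beta>)"
proof -
  let ?G = "kerr_ginv M a x"
  have "Fup M a F x $ m $ n = c * ((\<Sum>p\<in>UNIV. \<Sum>q\<in>UNIV. (?G $ m $ p * \<alpha> $ p) * (?G $ n $ q * \<beta> $ q))
      - (\<Sum>p\<in>UNIV. \<Sum>q\<in>UNIV. (?G $ m $ p * \<beta> $ p) * (?G $ n $ q * \<alpha> $ q)))" for m n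
    using assms
    by (simp add: Fup_def wedge1_def right_diff_distrib sum_subtractf sum_distrib_left mult_ac)
  moreover have "(\<Sum>p\<in>UNIV. \<Sum>q\<in>UNIV. (?G $ m $ p * \<beta> $ p) * (?G $ n $ q * \<alpha> $ q))
      = (?G *v \<alpha>) $ n * (?G *v \<beta>) $ m" for m n
    by (subst sum.swap) (simp add: matrix_vector_mult_def sum_product mult.commute)
  ultimately show ?thesis
    by (simp add: vec_eq_iff wedge1_def matrix_vector_mult_def sum_product)
qed

definition beta :: "real \<Rightarrow> real \<Rightarrow> (real \<Rightarrow> real) \<Rightarrow> real \<Rightarrow> real \<Rightarrow> real^4" where
  "beta a C f r t = (\<chi> n. if n = 0 then f r * a
     else if n = 2 then rho2 a r t * sqrt (C^2 - (f r)^2) / sin t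
     else if n = 3 then - (f r * (r^2 + a^2)) else 0)"

definition beta_up :: "real \<Rightarrow> real \<Rightarrow> (real \<Rightarrow> real) \<Rightarrow> real \<Rightarrow> real \<Rightarrow> real^4" where
  "beta_up a C f r t = (\<chi> n. if n = 0 then - f r * a
     else if n = 2 then sqrt (C^2 - (f r)^2) / sin t
     else if n = 3 then - f r / (sin t)^2 else 0)"

lemma F_M_eq_wedge1:
  "F_M M a C f u0 x = (u0 / Delta M a (x$1)) *\<^sub>R wedge1 (axis 1 1) (beta a C f (x$1) (x$2))"
  by (simp add: F_M_def beta_def Let_def wedge1_def vec_eq_iff all_4_iff axis_def)

lemma kerr_ginv_bl_dr:
  "kerr_ginv_bl M a r t *v axis 1 1 = (Delta M a r / rho2 a r t) *\<^sub>R axis 1 1"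
  by (simp add: vec_eq_iff all_4_iff matrix_vector_mult_def sum_UNIV_4 kerr_ginv_bl_def axis_def)

lemma kerr_ginv_bl_beta:
  assumes "rho2 a r t \<noteq> 0" and "Delta M a r \<noteq> 0" and "sin t \<noteq> 0"
  shows "kerr_ginv_bl M a r t *v beta a C f r t = beta_up a C f r t"
proof -
  have pyth: "(sin t)^2 + (cos t)^2 = 1" by simp
  show ?thesis using assms
    apply (simp add: vec_eq_iff all_4_iff matrix_vector_mult_def sum_UNIV_4 kerr_ginv_bl_def
        beta_def beta_up_def Sig2_def)
    apply (intro conjI)
     apply (simp_all add: field_simps)
     apply (unfold rho2_def Delta_def)
    using pyth apply algebra+
    done
qed

definition F_M_up :: "real \<Rightarrow> real \<Rightarrow> (real \<Rightarrow> real) \<Rightarrow> real \<Rightarrow> real \<Rightarrow> real \<Rightarrow> real^4^4" where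
  "F_M_up a C f u0 r t = (u0 / rho2 a r t) *\<^sub>R wedge1 (axis 1 1) (beta_up a C f r t)"

lemma Fup_F_M:
  assumes "M > 0" and "\<bar>a\<bar> \<le> M" and "x \<in> exterior M a"
  shows "Fup M a (F_M M a C f u0) x = F_M_up a C f u0 (x$1) (x$2)"
proof -
  note pos = exterior_pos[OF assms]
  have "Fup M a (F_M M a C f u0) x = (u0 / Delta M a (x$1)) *\<^sub>R
      wedge1 ((Delta M a (x$1) / rho2 a (x$1) (x$2)) *\<^sub>R axis 1 1) (beta_up a C f (x$1) (x$2))"
    using pos by (simp add: Fup_eq_wedge1[OF F_M_eq_wedge1] kerr_ginv_eq_bl kerr_ginv_bl_dr kerr_ginv_bl_beta)
  then show ?thesis using pos by (simp add: F_M_up_def wedge1_scaleR_left)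
qed

lemma F_M_up_nth:
  "F_M_up a C f u0 r t $ m $ n = (if m = 1 then u0 / rho2 a r t * beta_up a C f r t $ n else 0)
     - (if n = 1 then u0 / rho2 a r t * beta_up a C f r t $ m else 0)"
  by (simp add: F_M_up_def wedge1_def axis_def)

text \<open>The divergence of an antisymmetric tensor only needs the contracted Christoffel symbols.\<close>
lemma current_F_M_divergence:
  assumes "M > 0" and "\<bar>a\<bar> \<le> M" and "x \<in> exterior M a"
  shows "current M a (F_M M a C f u0) x $ n =
    - ((\<Sum>m\<in>UNIV. pd (\<lambda>y. Fup M a (F_M M a C f u0) y $ m $ n) m x)
       + (\<Sum>l\<in>UNIV. log_vol_grad a (x$1) (x$2) l * F_M_up a C f u0 (x$1) (x$2) $ l $ n))"
proof -
  note pos = exterior_pos[OF assms]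
  let ?U = "F_M_up a C f u0 (x$1) (x$2)" and ?G = "christoffel M a x"
  have trace: "(\<Sum>m\<in>UNIV. \<Sum>l\<in>UNIV. ?G m m l * ?U $ l $ n)
      = (\<Sum>l\<in>UNIV. log_vol_grad a (x$1) (x$2) l * ?U $ l $ n)"
    using pos by (subst sum.swap) (simp add: christoffel_trace sum_distrib_right[symmetric])
  have antisym: "(\<Sum>m\<in>UNIV. \<Sum>l\<in>UNIV. ?G n m l * ?U $ m $ l) = 0"
    by (rule sum_sym_antisym_eq_0) (simp_all add: christoffel_sym F_M_up_nth)
  show ?thesis
    unfolding current_def Fup_F_M[OF assms]
    by (simp add: sum.distrib trace antisym)
qed

definition beta_up_dr :: "real \<Rightarrow> real \<Rightarrow> (real \<Rightarrow> real) \<Rightarrow> real \<Rightarrow> real \<Rightarrow> real \<Rightarrow> real^4" where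
  "beta_up_dr a C f f' r t = (\<chi> n. if n = 0 then - f' * a
     else if n = 2 then - (f r * f') / (sqrt (C^2 - (f r)^2) * sin t)
     else if n = 3 then - f' / (sin t)^2 else 0)"

lemma sqrt_C2_minus_f2_has_deriv:
  assumes "C^2 - (f r)^2 > 0" and "(f has_real_derivative f') (at r)"
  shows "((\<lambda>r. sqrt (C^2 - (f r)^2)) has_real_derivative - (f r * f') / sqrt (C^2 - (f r)^2)) (at r)"
  using assms by (auto intro!: derivative_eq_intros simp: field_simps)

lemma beta_up_has_deriv_r:
  assumes "sin t \<noteq> 0" and "C^2 - (f r)^2 > 0" and "(f has_real_derivative f') (at r)"
  shows "((\<lambda>r. beta_up a C f r t $ n) has_real_derivative beta_up_dr a C f f' r t $ n) (at r)"
  using assms sqrt_C2_minus_f2_has_deriv[OF assms(2,3)]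
  by (cases n rule: exhaust_4_cases)
    (auto simp: beta_up_def beta_up_dr_def field_simps intro!: derivative_eq_intros)

lemma F_M_up_has_deriv_r:
  assumes "rho2 a r t \<noteq> 0" and "sin t \<noteq> 0" and "C^2 - (f r)^2 > 0"
    and "(f has_real_derivative f') (at r)" and "n \<noteq> 1"
  shows "((\<lambda>r. F_M_up a C f u0 r t $ 1 $ n) has_real_derivative
     u0 * beta_up_dr a C f f' r t $ n / rho2 a r t
     - u0 * beta_up a C f r t $ n * (2 * r) / (rho2 a r t)^2) (at r)"
  using assms beta_up_has_deriv_r[OF assms(2-4)]
  by (auto simp: F_M_up_nth field_simps power2_eq_square intro!: derivative_eq_intros rho2_has_deriv_r)

lemma F_M_up_has_deriv_theta:
  assumes "rho2 a r t \<noteq> 0" and "sin t \<noteq> 0"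
  shows "((\<lambda>t. F_M_up a C f u0 r t $ 2 $ 1) has_real_derivative
     u0 * sqrt (C^2 - (f r)^2) * (rho2_dtheta a t * sin t + rho2 a r t * cos t) / (rho2 a r t * sin t)^2) (at t)"
  using assms
  by (auto simp: F_M_up_nth beta_up_def field_simps power2_eq_square
      intro!: derivative_eq_intros rho2_has_deriv_theta)

lemma pd_Fup_F_M:
  assumes "M > 0" and "\<bar>a\<bar> \<le> M" and "x \<in> exterior M a"
  shows "pd (\<lambda>y. Fup M a (F_M M a C f u0) y $ m $ n) i x =
    (if i = 1 then deriv (\<lambda>r. F_M_up a C f u0 r (x$2) $ m $ n) (x$1)
     else if i = 2 then deriv (\<lambda>t. F_M_up a C f u0 (x$1) t $ m $ n) (x$2) else 0)"
proof -
  have "pd (\<lambda>y. Fup M a (F_M M a C f u0) y $ m $ n) i x = pd (\<lambda>y. F_M_up a C f u0 (y$1) (y$2) $ m $ n) i x"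
    using Fup_F_M[OF assms(1,2)] by (intro pd_cong_open[OF open_exterior assms(3)]) auto
  then show ?thesis using pd_r_theta[of "\<lambda>r t. F_M_up a C f u0 r t $ m $ n" i x] by simp
qed

lemma current_F_M:
  assumes "M > 0" and "\<bar>a\<bar> \<le> M" and x: "x \<in> exterior M a"
    and fd: "(f has_real_derivative f') (at (x$1))" and Q: "C^2 - (f (x$1))^2 > 0"
  shows "current M a (F_M M a C f u0) x
    = - (u0 / rho2 a (x$1) (x$2)) *\<^sub>R beta_up_dr a C f f' (x$1) (x$2)"
proof -
  define r t where "r = x$1" and "t = x$2"
  have R: "rho2 a r t \<noteq> 0" and S: "sin t \<noteq> 0"
    using exterior_pos[OF assms(1-3)] by (auto simp: r_def t_def)
  have fd': "(f has_real_derivative f') (at r)" and Q': "C^2 - (f r)^2 > 0"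
    using fd Q by (simp_all add: r_def)
  have j: "current M a (F_M M a C f u0) x $ n =
    - ((\<Sum>m\<in>UNIV. if m = 1 then deriv (\<lambda>r. F_M_up a C f u0 r t $ m $ n) r
         else if m = 2 then deriv (\<lambda>t. F_M_up a C f u0 r t $ m $ n) t else 0)
       + (\<Sum>l\<in>UNIV. log_vol_grad a r t l * F_M_up a C f u0 r t $ l $ n))" for n
    unfolding current_F_M_divergence[OF assms(1-3)] pd_Fup_F_M[OF assms(1-3)] r_def t_def by simp
  have "current M a (F_M M a C f u0) x $ n = - (u0 / rho2 a r t) * beta_up_dr a C f f' r t $ n" for n
  proof (cases "n = 1")
    case True
    text \<open>Here \<open>j\<^sup>r = \<partial>\<^sub>\<theta>(\<rho>\<^sup>2 sin \<theta> F\<^sup>\<theta>\<^sup>r) / (\<rho>\<^sup>2 sin \<theta>)\<close>, and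
      \<open>\<rho>\<^sup>2 sin \<theta> F\<^sup>\<theta>\<^sup>r = - u0 sqrt (C\<^sup>2 - f\<^sup>2)\<close> does not depend on \<open>\<theta>\<close>.\<close>
    have "(\<lambda>r. F_M_up a C f u0 r t $ 1 $ 1) = (\<lambda>r. 0)" by (simp add: F_M_up_nth)
    moreover note DERIV_imp_deriv[OF F_M_up_has_deriv_theta[OF R S, of C f u0]]
    ultimately show ?thesis unfolding j using True R S
      by (simp add: sum_UNIV_4 log_vol_grad_def F_M_up_nth beta_up_def beta_up_dr_def
          field_simps power2_eq_square)
  next
    case False
    have "(\<lambda>t. F_M_up a C f u0 r t $ 2 $ n) = (\<lambda>t. 0)" using False by (simp add: F_M_up_nth)
    moreover note DERIV_imp_deriv[OF F_M_up_has_deriv_r[OF R S Q' fd' False, of u0]]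
    ultimately show ?thesis unfolding j using False R
      by (simp add: sum_UNIV_4 log_vol_grad_def F_M_up_nth field_simps power2_eq_square)
  qed
  then show ?thesis by (simp add: vec_eq_iff r_def t_def)
qed

section \<open>Force-free, magnetically dominated, closed\<close>

lemma beta_nth_1 [simp]: "beta a C f r t $ 1 = 0"
  and beta_up_nth_1 [simp]: "beta_up a C f r t $ 1 = 0"
  and beta_up_dr_nth_1 [simp]: "beta_up_dr a C f f' r t $ 1 = 0"
  by (simp_all add: beta_def beta_up_def beta_up_dr_def)

lemma beta_inner_beta_up_dr:
  assumes "sin t \<noteq> 0" and "C^2 - (f r)^2 > 0"
  shows "beta a C f r t \<bullet> beta_up_dr a C f f' r t = 0"
proof -
  have q: "sqrt (C^2 - (f r)^2) \<noteq> 0" using assms(2) by simp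
  have pyth: "(sin t)^2 + (cos t)^2 = 1" by simp
  show ?thesis using assms(1) q
    apply (simp add: inner_vec_def sum_UNIV_4 beta_def beta_up_dr_def)
    apply (simp add: field_simps)
    apply (unfold rho2_def)
    using pyth apply algebra
    done
qed

lemma beta_inner_beta_up:
  assumes "rho2 a r t \<noteq> 0" and "sin t \<noteq> 0" and "C^2 - (f r)^2 > 0"
  shows "beta a C f r t \<bullet> beta_up a C f r t = rho2 a r t * C^2 / (sin t)^2"
proof -
  have q: "(sqrt (C^2 - (f r)^2))^2 = C^2 - (f r)^2" using assms(3) by simp
  have pyth: "(sin t)^2 + (cos t)^2 = 1" by simp
  show ?thesis using assms(1,2)
    apply (simp add: inner_vec_def sum_UNIV_4 beta_def beta_up_def)
    apply (simp add: field_simps q abs_of_pos[OF assms(3)])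
    apply (unfold rho2_def)
    using pyth q apply algebra
    done
qed

lemma force_free_F_M_at:
  assumes "M > 0" and "\<bar>a\<bar> \<le> M" and x: "x \<in> exterior M a"
    and fd: "(f has_real_derivative f') (at (x$1))" and Q: "C^2 - (f (x$1))^2 > 0"
  shows "form_apply (F_M M a C f u0 x) (current M a (F_M M a C f u0) x) w = 0"
proof -
  have S: "sin (x$2) \<noteq> 0" using exterior_pos[OF assms(1-3)] by simp
  show ?thesis
    by (simp add: F_M_eq_wedge1 current_F_M[OF assms] form_apply_scaleR form_apply_wedge1 inner_axis'
        inner_commute[of "beta_up_dr _ _ _ _ _ _"] beta_inner_beta_up_dr[where f=f and r="x$1", OF S Q])
qed

lemma magnetically_dominated_F_M_at:
  assumes "M > 0" and "\<bar>a\<bar> \<le> M" and x: "x \<in> exterior M a"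
    and Q: "C^2 - (f (x$1))^2 > 0" and "C \<noteq> 0" and "u0 \<noteq> 0"
  shows "(\<Sum>m\<in>UNIV. \<Sum>n\<in>UNIV. F_M M a C f u0 x $ m $ n * Fup M a (F_M M a C f u0) x $ m $ n) > 0"
proof -
  note pos = exterior_pos[OF assms(1-3)]
  let ?r = "x$1" and ?t = "x$2"
  let ?\<beta> = "beta a C f ?r ?t" and ?b = "beta_up a C f ?r ?t"
  have "(\<Sum>m\<in>UNIV. \<Sum>n\<in>UNIV. F_M M a C f u0 x $ m $ n * Fup M a (F_M M a C f u0) x $ m $ n)
      = (u0 / Delta M a ?r) * (u0 / rho2 a ?r ?t)
        * (\<Sum>m\<in>UNIV. \<Sum>n\<in>UNIV. wedge1 (axis 1 1) ?\<beta> $ m $ n * wedge1 (axis 1 1) ?b $ m $ n)"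
    by (simp add: Fup_F_M[OF assms(1-3)] F_M_eq_wedge1 F_M_up_def sum_distrib_left mult_ac)
  also have "\<dots> = 2 * (u0 / Delta M a ?r) * (u0 / rho2 a ?r ?t) * (?\<beta> \<bullet> ?b)"
    by (simp add: wedge1_contract inner_axis inner_axis')
  also have "\<dots> = 2 * u0^2 * C^2 / (Delta M a ?r * (sin ?t)^2)"
    using pos Q by (simp add: beta_inner_beta_up field_simps power2_eq_square)
  also have "\<dots> > 0"
    using pos assms(5,6) by (simp add: mult_pos_pos)
  finally show ?thesis .
qed

definition F_M_r :: "real \<Rightarrow> real \<Rightarrow> real \<Rightarrow> (real \<Rightarrow> real) \<Rightarrow> real \<Rightarrow> 4 \<Rightarrow> real \<Rightarrow> real \<Rightarrow> real" where
  "F_M_r M a C f u0 k r t = u0 / Delta M a r * beta a C f r t $ k"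

lemma F_M_nth:
  "F_M M a C f u0 x $ m $ n = (if m = 1 then F_M_r M a C f u0 n (x$1) (x$2) else 0)
     - (if n = 1 then F_M_r M a C f u0 m (x$1) (x$2) else 0)"
  by (simp add: F_M_eq_wedge1 wedge1_def axis_def F_M_r_def)

lemma F_M_r_differentiable_r:
  assumes "Delta M a r \<noteq> 0" and "sin t \<noteq> 0" and "C^2 - (f r)^2 > 0"
    and "(f has_real_derivative f') (at r)"
  shows "(\<lambda>r. F_M_r M a C f u0 k r t) differentiable (at r)"
proof -
  have "f differentiable (at r)" and "(\<lambda>r. sqrt (C^2 - (f r)^2)) differentiable (at r)"
    using assms(4) sqrt_C2_minus_f2_has_deriv[OF assms(3,4)] real_differentiable_def by blast+
  moreover have "r^2 - 2 * M * r + a^2 \<noteq> 0" using assms(1) by (simp add: Delta_def)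
  ultimately show ?thesis using assms(2)
    by (cases k rule: exhaust_4_cases)
      (auto simp: F_M_r_def beta_def Delta_def rho2_def intro!: derivative_intros)
qed

lemma F_M_r_differentiable_theta:
  assumes "Delta M a r \<noteq> 0" and "sin t \<noteq> 0"
  shows "(\<lambda>t. F_M_r M a C f u0 k r t) differentiable (at t)"
proof -
  have "sin differentiable (at t)" and "cos differentiable (at t)"
    using DERIV_sin DERIV_cos real_differentiable_def by blast+
  then show ?thesis using assms
    by (cases k rule: exhaust_4_cases) (auto simp: F_M_r_def beta_def rho2_def intro!: derivative_intros)
qed

lemma deriv_F_M_r_theta: "k \<noteq> 2 \<Longrightarrow> deriv (\<lambda>t. F_M_r M a C f u0 k r t) t = 0"
  by (cases k rule: exhaust_4_cases) (simp_all add: F_M_r_def beta_def)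

lemma deriv_antisym_component:
  fixes g :: "'i \<Rightarrow> real \<Rightarrow> real"
  assumes "\<And>k. g k differentiable (at z)"
  shows "deriv (\<lambda>z. (if m = i then g n z else 0) - (if n = i then g m z else 0)) z =
    (if m = i \<and> n \<noteq> i then deriv (g n) z else if n = i \<and> m \<noteq> i then - deriv (g m) z else 0)"
proof -
  have "(g m has_real_derivative deriv (g m) z) (at z)"
    using assms DERIV_deriv_iff_real_differentiable by blast
  from DERIV_imp_deriv[OF DERIV_minus[OF this]] show ?thesis
    by (cases "m = i"; cases "n = i") simp_all
qed

lemma pd_F_M:
  assumes "M > 0" and "\<bar>a\<bar> \<le> M" and "x \<in> exterior M a"
    and fd: "(f has_real_derivative f') (at (x$1))" and Q: "C^2 - (f (x$1))^2 > 0"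
  shows "pd (\<lambda>y. F_M M a C f u0 y $ m $ n) l x =
    (if l = 1 then (if m = 1 \<and> n \<noteq> 1 then deriv (\<lambda>r. F_M_r M a C f u0 n r (x$2)) (x$1)
                    else if n = 1 \<and> m \<noteq> 1 then - deriv (\<lambda>r. F_M_r M a C f u0 m r (x$2)) (x$1) else 0)
     else if l = 2 then (if m = 1 \<and> n \<noteq> 1 then deriv (\<lambda>t. F_M_r M a C f u0 n (x$1) t) (x$2)
                    else if n = 1 \<and> m \<noteq> 1 then - deriv (\<lambda>t. F_M_r M a C f u0 m (x$1) t) (x$2) else 0)
     else 0)"
proof -
  have nz: "Delta M a (x$1) \<noteq> 0" "sin (x$2) \<noteq> 0" using exterior_pos[OF assms(1-3)] by simp_all
  define H where "H r t = (if m = 1 then F_M_r M a C f u0 n r t else 0)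
    - (if n = 1 then F_M_r M a C f u0 m r t else 0)" for r t
  have "(\<lambda>y. F_M M a C f u0 y $ m $ n) = (\<lambda>y. H (y$1) (y$2))"
    by (simp add: H_def F_M_nth)
  moreover have "deriv (\<lambda>r. H r (x$2)) (x$1) = (if m = 1 \<and> n \<noteq> 1 then deriv (\<lambda>r. F_M_r M a C f u0 n r (x$2)) (x$1)
      else if n = 1 \<and> m \<noteq> 1 then - deriv (\<lambda>r. F_M_r M a C f u0 m r (x$2)) (x$1) else 0)"
    unfolding H_def
    by (intro deriv_antisym_component[of "\<lambda>k r. F_M_r M a C f u0 k r (x$2)"] F_M_r_differentiable_r[OF nz Q fd])
  moreover have "deriv (\<lambda>t. H (x$1) t) (x$2) = (if m = 1 \<and> n \<noteq> 1 then deriv (\<lambda>t. F_M_r M a C f u0 n (x$1) t) (x$2)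
      else if n = 1 \<and> m \<noteq> 1 then - deriv (\<lambda>t. F_M_r M a C f u0 m (x$1) t) (x$2) else 0)"
    unfolding H_def
    by (intro deriv_antisym_component[of "\<lambda>k t. F_M_r M a C f u0 k (x$1) t"] F_M_r_differentiable_theta[OF nz])
  ultimately show ?thesis by (simp add: pd_r_theta[of H])
qed

text \<open>Only the components \<open>F\<^sub>r\<^sub>k\<close> are nonzero and only \<open>F\<^sub>r\<^sub>\<theta>\<close> depends on \<open>\<theta>\<close>,
  so every term of the cyclic sum vanishes or cancels against another.\<close>
lemma closed_F_M_at:
  assumes "M > 0" and "\<bar>a\<bar> \<le> M" and "x \<in> exterior M a"
    and "(f has_real_derivative f') (at (x$1))" and "C^2 - (f (x$1))^2 > 0"
  shows "pd (\<lambda>y. F_M M a C f u0 y $ m $ n) l x + pd (\<lambda>y. F_M M a C f u0 y $ n $ l) m x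
    + pd (\<lambda>y. F_M M a C f u0 y $ l $ m) n x = 0"
  unfolding pd_F_M[OF assms]
  by (cases l rule: exhaust_4_cases; cases m rule: exhaust_4_cases; cases n rule: exhaust_4_cases)
    (simp_all add: deriv_F_M_r_theta)

section \<open>The kernel\<close>

lemma form_kernel_F_M:
  assumes "M > 0" and "\<bar>a\<bar> \<le> M" and "x \<in> exterior M a"
    and "C^2 - (f (x$1))^2 > 0" and "u0 \<noteq> 0"
  shows "form_kernel (F_M M a C f u0 x) = {v. v$1 = 0 \<and> beta a C f (x$1) (x$2) \<bullet> v = 0}"
proof -
  note pos = exterior_pos[OF assms(1-3)]
  then have "beta a C f (x$1) (x$2) $ 2 \<noteq> 0"
    using assms(4) by (simp add: beta_def)
  then have "beta a C f (x$1) (x$2) \<notin> span {axis 1 1}"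
    by (auto simp: span_singleton axis_def)
  then show ?thesis
    using pos assms(5) by (simp add: F_M_eq_wedge1 form_kernel_scaleR form_kernel_wedge1 inner_axis')
qed

lemma span_pair_eqI:
  assumes "subspace K" and "u \<in> K" and "w \<in> K"
    and "\<And>v. v \<in> K \<Longrightarrow> \<exists>\<alpha> \<gamma>. v = \<alpha> *\<^sub>R u + \<gamma> *\<^sub>R w"
  shows "K = span {u, w}"
proof
  show "span {u, w} \<subseteq> K" using assms(1-3) by (intro span_minimal) auto
  show "K \<subseteq> span {u, w}"
    using assms(4) by (metis span_add span_scale span_base insertI1 insertI2 singletonI subsetI)
qed

lemma kernel_F_M_eq_span:
  assumes R: "rho2 a (x$1) (x$2) > 0" and D: "Delta M a (x$1) > 0" and S: "sin (x$2) > 0"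
    and Q: "C^2 - (f (x$1))^2 > 0"
  shows "{v. v$1 = 0 \<and> beta a C f (x$1) (x$2) \<bullet> v = 0} = span {e0 M a x, e1 a C f x}"
proof (rule span_pair_eqI)
  define r t where "r = x$1" and "t = x$2"
  define q where "q = sqrt (C^2 - (f r)^2)"
  define L where "L = f r / q"
  define k0 where "k0 = 1 / sqrt (rho2 a r t * Delta M a r)"
  define k1 where "k1 = 1 / (sqrt (rho2 a r t * (1 + L^2)) * sin t)"
  have R': "rho2 a r t > 0" and D': "Delta M a r > 0" and S': "sin t > 0" and q0: "q > 0"
    using assms by (simp_all add: r_def t_def q_def)
  have pyth: "(sin t)^2 + (cos t)^2 = 1" by simp
  have "1 + L^2 > 0" by (simp add: add_pos_nonneg)
  then have k0: "k0 \<noteq> 0" and k1: "k1 \<noteq> 0"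
    using R' D' S' by (simp_all add: k0_def k1_def)
  have e0: "e0 M a x $ 0 = k0 * (r^2 + a^2)" "e0 M a x $ 1 = 0" "e0 M a x $ 2 = 0" "e0 M a x $ 3 = k0 * a"
    by (simp_all add: e0_def Let_def axis_def r_def[symmetric] t_def[symmetric] k0_def)
  have e1: "e1 a C f x $ 0 = k1 * (a * (sin t)^2)" "e1 a C f x $ 1 = 0"
    "e1 a C f x $ 2 = k1 * (L * sin t)" "e1 a C f x $ 3 = k1"
    by (simp_all add: e1_def Let_def axis_def r_def[symmetric] t_def[symmetric] k1_def L_def q_def)
  have \<beta>: "beta a C f r t \<bullet> v = f r * a * v$0 + rho2 a r t * q / sin t * v$2 - f r * (r^2 + a^2) * v$3" for v
    by (simp add: inner_vec_def sum_UNIV_4 beta_def q_def algebra_simps)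
  let ?K = "{v. v$1 = 0 \<and> beta a C f (x$1) (x$2) \<bullet> v = 0}"
  show "subspace ?K"
    by (auto simp: subspace_def inner_add_right)
  show "e0 M a x \<in> ?K"
    by (simp add: r_def[symmetric] t_def[symmetric] \<beta> e0 algebra_simps)
  have "beta a C f r t \<bullet> e1 a C f x
      = k1 * (f r * a * (a * (sin t)^2) + rho2 a r t * q / sin t * (L * sin t) - f r * (r^2 + a^2))"
    by (simp add: \<beta> e1 algebra_simps)
  also have "\<dots> = 0"
    using q0 S' unfolding L_def rho2_def by (simp add: field_simps) (use pyth in algebra)
  finally show "e1 a C f x \<in> ?K"
    by (simp add: r_def[symmetric] t_def[symmetric] e1)
  fix v assume "v \<in> ?K"
  then have v1: "v$1 = 0" and v\<beta>: "f r * a * v$0 + rho2 a r t * q / sin t * v$2 - f r * (r^2 + a^2) * v$3 = 0"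
    by (simp_all add: r_def[symmetric] t_def[symmetric] \<beta>)
  define \<alpha> where "\<alpha> = (v$0 - a * (sin t)^2 * v$3) / (k0 * rho2 a r t)"
  define \<gamma> where "\<gamma> = ((r^2 + a^2) * v$3 - a * v$0) / (k1 * rho2 a r t)"
  have "v$0 = \<alpha> * (k0 * (r^2 + a^2)) + \<gamma> * (k1 * (a * (sin t)^2))"
    unfolding \<alpha>_def \<gamma>_def using k0 k1 R'
    apply (simp add: field_simps)
    apply (unfold rho2_def)
    using pyth apply algebra
    done
  moreover have "v$3 = \<alpha> * (k0 * a) + \<gamma> * k1"
    unfolding \<alpha>_def \<gamma>_def using k0 k1 R'
    apply (simp add: field_simps)
    apply (unfold rho2_def)
    using pyth apply algebra
    done
  moreover have "v$2 = \<gamma> * (k1 * (L * sin t))"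
  proof -
    have "rho2 a r t * q / sin t * v$2 = f r * ((r^2 + a^2) * v$3 - a * v$0)"
      using v\<beta> by (simp add: algebra_simps)
    then have "v$2 = f r * ((r^2 + a^2) * v$3 - a * v$0) * sin t / (rho2 a r t * q)"
      using S' R' q0 by (simp add: field_simps)
    moreover have "\<gamma> * (k1 * (L * sin t)) = f r * ((r^2 + a^2) * v$3 - a * v$0) * sin t / (rho2 a r t * q)"
      using k1 R' q0 unfolding \<gamma>_def L_def by (simp add: field_simps)
    ultimately show ?thesis by simp
  qed
  ultimately have "v = \<alpha> *\<^sub>R e0 M a x + \<gamma> *\<^sub>R e1 a C f x"
    using v1 by (simp add: vec_eq_iff all_4_iff e0 e1)
  then show "\<exists>\<alpha> \<gamma>. v = \<alpha> *\<^sub>R e0 M a x + \<gamma> *\<^sub>R e1 a C f x" by blast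
qed

lemma vacuum_F_M_at:
  assumes "M > 0" and "\<bar>a\<bar> \<le> M" and "x \<in> exterior M a"
    and "(f has_real_derivative 0) (at (x$1))" and "C^2 - (f (x$1))^2 > 0"
  shows "current M a (F_M M a C f u0) x = 0"
  by (simp add: current_F_M[OF assms] beta_up_dr_def vec_eq_iff)

theorem mainTheorem12:
  fixes M a C u0 :: real and f :: "real \<Rightarrow> real"
  assumes "M > 0" and "\<bar>a\<bar> \<le> M"
    and "C \<noteq> 0" and "u0 \<noteq> 0"
    and "smooth_real_on {M + sqrt (M\<^sup>2 - a\<^sup>2)<..} f"
    and "\<forall>r > M + sqrt (M\<^sup>2 - a\<^sup>2). (f r)\<^sup>2 < C\<^sup>2"
  shows "closed_form (F_M M a C f u0) (exterior M a)
    \<and> force_free M a (F_M M a C f u0) (exterior M a)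
    \<and> magnetically_dominated M a (F_M M a C f u0) (exterior M a)
    \<and> (\<forall>x\<in>exterior M a. form_kernel (F_M M a C f u0 x) = span {e0 M a x, e1 a C f x})
    \<and> ((\<exists>c. \<forall>r > M + sqrt (M\<^sup>2 - a\<^sup>2). f r = c) \<longrightarrow> vacuum M a (F_M M a C f u0) (exterior M a))"
proof -
  let ?R = "{M + sqrt (M\<^sup>2 - a\<^sup>2)<..}"
  have R: "x$1 \<in> ?R" if "x \<in> exterior M a" for x
    using that by (simp add: exterior_def)
  have fd: "(f has_real_derivative deriv f (x$1)) (at (x$1))" if "x \<in> exterior M a" for x
    using assms(5) R[OF that] unfolding smooth_real_on_def DERIV_deriv_iff_real_differentiable
    by (metis funpow_0)
  have Q: "C^2 - (f (x$1))^2 > 0" if "x \<in> exterior M a" for x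
    using assms(6) R[OF that] by simp
  have "closed_form (F_M M a C f u0) (exterior M a)"
    unfolding closed_form_def by (intro ballI allI closed_F_M_at[where f=f, OF assms(1,2) _ fd Q])
  moreover have "force_free M a (F_M M a C f u0) (exterior M a)"
    unfolding force_free_def by (intro ballI allI force_free_F_M_at[where f=f, OF assms(1,2) _ fd Q])
  moreover have "magnetically_dominated M a (F_M M a C f u0) (exterior M a)"
    unfolding magnetically_dominated_def
    by (intro ballI magnetically_dominated_F_M_at[where f=f, OF assms(1,2) _ Q assms(3,4)])
  moreover have "form_kernel (F_M M a C f u0 x) = span {e0 M a x, e1 a C f x}" if "x \<in> exterior M a" for x
    using form_kernel_F_M[where f=f, OF assms(1,2) that Q[OF that] assms(4)]
      kernel_F_M_eq_span[where f=f, OF exterior_pos(3,1,2)[OF assms(1,2) that] Q[OF that]] by simp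
  moreover have "vacuum M a (F_M M a C f u0) (exterior M a)" if "\<exists>c. \<forall>r > M + sqrt (M\<^sup>2 - a\<^sup>2). f r = c"
  proof -
    have "(f has_real_derivative 0) (at (x$1))" if "x \<in> exterior M a" for x
      using \<open>\<exists>c. _\<close> R[OF that]
      by (auto intro: has_field_derivative_transform_within_open[OF DERIV_const open_greaterThan])
    then show ?thesis
      unfolding vacuum_def by (intro ballI vacuum_F_M_at[where f=f, OF assms(1,2) _ _ Q])
  qed
  ultimately show ?thesis by blast
qed

end
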